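(* Let $\Theta\subseteq\mathbb{R}^p$ be convex and let $f=\frac1T\sum_{t=1}^Tf^t$ where each $f^t:\mathbb{R}^p\to\mathbb{R}$ is continuous, $f$ is convex with a minimizer $\theta^\star$ on $\Theta$, $f^\star\triangleq\min_{\theta\in\Theta}f(\theta)$, and $\delta\triangleq1/T$. Consider the incremental scheme (MISO): given $\theta_0\in\Theta$, choose surrogates $g_0^t$ of $f^t$ near $\theta_0$ for all $t$; for $n\ge1$, pick $\hat t_n\in\{1,\dots,T\}$ uniformly at random (independently), choose a surrogate $g_n^{\hat t_n}$ of $f^{\hat t_n}$ near $\theta_{n-1}$, set $g_n^t\triangleq g_{n-1}^t$ for $t\ne\hat t_n$, and set $\theta_n\in\operatorname{arg\,min}_{\theta\in\Theta}\frac1T\sum_{t=1}^Tg_n^t(\theta)$. Assume every surrogate is a majorant function, with $g_0^t\in\mathcal{S}_{L,\rho}(f^t,\theta_0)$ and $g_n^{\hat t_n}\in\mathcal{S}_{L,\rho}(f^{\hat t_n},\theta_{n-1})$, where $\rho\ge L$. Then $$\mathbb{E}[f(\theta_n)-f^\star]\le\frac{L\|\theta^\star-\theta_0\|_2^2}{2\delta n}\quad\text{for all }n\ge1.$$ If moreover $f$ is $\mu$-strongly convex, then for all $n\ge1$, $$\mathbb{E}[\|\theta^\star-\theta_n\|_2^2]\le\Big((1-\delta)+\delta\frac{L}{\rho+\mu}\Big)^n\|\theta^\star-\theta_0\|_2^2,\qquad\mathbb{E}[f(\theta_n)-f^\star]\le\Big((1-\delta)+\delta\frac{L}{\rho+\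mu}\Big)^{n-1}\frac{L\|\theta^\star-\theta_0\|_2^2}{2}.$$
   Context: First-order surrogates: $g:\mathbb{R}^p\to\mathbb{R}$ belongs to $\mathcal{S}_L(\phi,\kappa)$ if (a) $g(\theta')\ge\phi(\theta')$ for all $\theta'\in\operatorname{arg\,min}_{\theta\in\Theta}g(\theta)$, and (b) $h\triangleq g-\phi$ is differentiable with $L$-Lipschitz gradient, $h(\kappa)=0$, $\nabla h(\kappa)=0$; $\mathcal{S}_{L,\rho}(\phi,\kappa)$ is the subset of $\rho$-strongly convex elements. A majorant function satisfies $g\ge\phi$ everywhere. The minimizers are assumed to exist. *)

theory Defs
  imports "HOL-Analysis.Analysis" "HOL-Probability.Probability"
begin

definition strongly_convex_on :: "'a::real_inner set \<Rightarrow> real \<Rightarrow> ('a \<Rightarrow> real) \<Rightarrow> bool" where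
  "strongly_convex_on S mu g \<longleftrightarrow> convex_on S (\<lambda>x. g x - mu / 2 * (norm x)\<^sup>2)"

definition first_order_surrogate ::
  "'a::euclidean_space set \<Rightarrow> real \<Rightarrow> ('a \<Rightarrow> real) \<Rightarrow> 'a \<Rightarrow> ('a \<Rightarrow> real) \<Rightarrow> bool" where
  "first_order_surrogate Theta L phi kappa g \<longleftrightarrow>
     (\<forall>\<theta>'. (\<theta>' \<in> Theta \<and> (\<forall>\<theta>\<in>Theta. g \<theta>' \<le> g \<theta>)) \<longrightarrow> g \<theta>' \<ge> phi \<theta>') \<and>
     (\<exists>gh. (\<forall>x. ((\<lambda>y. g y - phi y) has_derivative (\<lambda>v. gh x \<bullet> v)) (at x)) \<and>
           L-lipschitz_on UNIV gh \<and>
           g kappa - phi kappa = 0 \<and> gh kappa = 0)"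

definition sc_first_order_surrogate ::
  "'a::euclidean_space set \<Rightarrow> real \<Rightarrow> real \<Rightarrow> ('a \<Rightarrow> real) \<Rightarrow> 'a \<Rightarrow> ('a \<Rightarrow> real) \<Rightarrow> bool" where
  "sc_first_order_surrogate Theta L rho phi kappa g \<longleftrightarrow>
     first_order_surrogate Theta L phi kappa g \<and> strongly_convex_on UNIV rho g"

definition majorant :: "('a \<Rightarrow> real) \<Rightarrow> ('a \<Rightarrow> real) \<Rightarrow> bool" where
  "majorant phi g \<longleftrightarrow> (\<forall>x. g x \<ge> phi x)"

(* set of histories (t_1,...,t_n) of sampled indices in {1..T}; uniform = i.i.d. uniform picks *)
definition histories :: "nat \<Rightarrow> nat \<Rightarrow> nat list set" where
  "histories T n = {hs. length hs = n \<and> set hs \<subseteq> {1..T}}"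

end

theory Submission
  imports Defs
begin

text \<open>
  Write \<open>gbar\<close> for the average of the current surrogates and track the two gaps
  \<open>opt_gap = gbar(\<theta>\<^sup>*) - f\<^sup>*\<close> and \<open>iter_gap = gbar(\<theta>\<^sub>n) - f\<^sup>*\<close>.
  Since surrogates majorize their component and touch it at the anchor, \<open>iter_gap\<close>
  never increases along the iteration and dominates \<open>f(\<theta>\<^sub>n) - f\<^sup>*\<close>.
  Since a fresh surrogate exceeds its component by at most \<open>L/2 \<parallel>\<cdot> - \<theta>\<^sub>n\<parallel>\<^sup>2\<close>,
  averaging over the sampled index gives
  \<open>E opt_gap\<^sub>n\<^sub>+\<^sub>1 \<le> (1 - \<delta>) E opt_gap\<^sub>n + \<delta> L/2 E \<parallel>\<theta>\<^sup>* - \<theta>\<^sub>n\<parallel>\<^sup>2\<close>, while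
  \<open>\<rho>\<close>-strong convexity of \<open>gbar\<close> at its minimizer \<open>\<theta>\<^sub>n\<close> gives
  \<open>iter_gap + \<rho>/2 \<parallel>\<theta>\<^sup>* - \<theta>\<^sub>n\<parallel>\<^sup>2 \<le> opt_gap\<close>. As \<open>\<rho> \<ge> L\<close>, the expected
  \<open>opt_gap\<close> decreases by at least \<open>\<delta>\<close> times the expected \<open>iter_gap\<close>, which telescopes
  to the \<open>O(1/(\<delta> n))\<close> rate. If \<open>f\<close> is \<open>\<mu>\<close>-strongly convex, additionally
  \<open>opt_gap \<ge> (\<rho> + \<mu>)/2 \<parallel>\<theta>\<^sup>* - \<theta>\<^sub>n\<parallel>\<^sup>2\<close>, and the recursion becomes a contraction
  with factor \<open>(1 - \<delta>) + \<delta> L/(\<rho> + \<mu>)\<close>.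
\<close>

lemma convex_on_sum_fun:
  assumes "finite I" "I \<noteq> {}" "\<And>i. i \<in> I \<Longrightarrow> convex_on S (f i)"
  shows "convex_on S (\<lambda>x. \<Sum>i\<in>I. f i x)"
  using assms by (induction I rule: finite_ne_induct) auto

lemma strongly_convex_on_average:
  assumes "finite I" "I \<noteq> {}" "\<And>i. i \<in> I \<Longrightarrow> strongly_convex_on S rho (f i)"
  shows "strongly_convex_on S rho (\<lambda>x. (1 / real (card I)) * (\<Sum>i\<in>I. f i x))"
proof -
  have "convex_on S (\<lambda>x. (1 / real (card I)) * (\<Sum>i\<in>I. f i x - rho / 2 * (norm x)\<^sup>2))"
    using assms by (intro convex_on_cmul convex_on_sum_fun) (auto simp: strongly_convex_on_def)
  moreover have "(1 / real (card I)) * (\<Sum>i\<in>I. f i x - rho / 2 * (norm x)\<^sup>2)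
      = (1 / real (card I)) * (\<Sum>i\<in>I. f i x) - rho / 2 * (norm x)\<^sup>2" for x
    using assms(1,2) by (simp add: sum_subtractf right_diff_distrib)
  ultimately show ?thesis
    unfolding strongly_convex_on_def by simp
qed

lemma strongly_convex_on_subset:
  "strongly_convex_on T rho G \<Longrightarrow> S \<subseteq> T \<Longrightarrow> convex S \<Longrightarrow> strongly_convex_on S rho G"
  unfolding strongly_convex_on_def by (rule convex_on_subset)

lemma strongly_convex_onD:
  assumes "strongly_convex_on S rho G" "x \<in> S" "y \<in> S" "0 \<le> t" "t \<le> 1"
  shows "G ((1 - t) *\<^sub>R x + t *\<^sub>R y)
           \<le> (1 - t) * G x + t * G y - rho / 2 * t * (1 - t) * (norm (x - y))\<^sup>2"
proof -
  define z where "z = (1 - t) *\<^sub>R x + t *\<^sub>R y"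
  have convex: "G z - rho / 2 * (norm z)\<^sup>2
      \<le> (1 - t) * (G x - rho / 2 * (norm x)\<^sup>2) + t * (G y - rho / 2 * (norm y)\<^sup>2)"
    using assms unfolding strongly_convex_on_def z_def by (intro convex_onD) auto
  have "(1 - t) * (norm x)\<^sup>2 + t * (norm y)\<^sup>2 - (norm z)\<^sup>2 = t * (1 - t) * (norm (x - y))\<^sup>2"
    unfolding power2_norm_eq_inner z_def by (simp add: inner_commute algebra_simps)
  then have "rho / 2 * ((1 - t) * (norm x)\<^sup>2 + t * (norm y)\<^sup>2 - (norm z)\<^sup>2)
      = rho / 2 * t * (1 - t) * (norm (x - y))\<^sup>2"
    by simp
  with convex show ?thesis
    unfolding z_def[symmetric] by (simp add: field_simps)
qed

lemma strongly_convex_on_minimizer_growth: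
  assumes sc: "strongly_convex_on S rho G" and "convex S" "a \<in> S" "b \<in> S"
    and min: "\<And>x. x \<in> S \<Longrightarrow> G a \<le> G x"
  shows "G a + rho / 2 * (norm (a - b))\<^sup>2 \<le> G b"
proof -
  define K where "K = rho / 2 * (norm (a - b))\<^sup>2"
  have along_segment: "G a \<le> (1 - t) * G a + t * G b - K * t * (1 - t)" if "0 \<le> t" "t \<le> 1" for t
  proof -
    have "(1 - t) *\<^sub>R a + t *\<^sub>R b \<in> S"
      using convexD[OF \<open>convex S\<close> \<open>a \<in> S\<close> \<open>b \<in> S\<close>, of "1 - t" t] that by simp
    with min strongly_convex_onD[OF sc \<open>a \<in> S\<close> \<open>b \<in> S\<close> that] show ?thesis
      by (fastforce simp: K_def algebra_simps)
  qed
  show ?thesis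
  proof (rule ccontr)
    assume "\<not> ?thesis"
    then have gap: "G b - G a < K"
      by (simp add: K_def)
    have "G a \<le> G b"
      using along_segment[of 1] by simp
    \<comment> \<open>the point of the segment where \<open>along_segment\<close> contradicts \<open>gap\<close>\<close>
    define t where "t = (K - (G b - G a)) / (2 * K)"
    have "K > 0" "0 < t" "t \<le> 1"
      using gap \<open>G a \<le> G b\<close> by (auto simp: t_def field_simps)
    have "t * (K * (1 - t)) \<le> t * (G b - G a)"
      using along_segment[of t] \<open>0 < t\<close> \<open>t \<le> 1\<close> by (simp add: algebra_simps)
    then have "K * (1 - t) \<le> G b - G a"
      using \<open>0 < t\<close> by simp
    moreover have "K * (1 - t) = (K + (G b - G a)) / 2"
      using \<open>K > 0\<close> by (simp add: t_def field_simps)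
    ultimately show False
      using gap by simp
  qed
qed

lemma lipschitz_gradient_quadratic_bound:
  fixes h :: "'a::euclidean_space \<Rightarrow> real"
  assumes deriv: "\<And>x. (h has_derivative (\<lambda>v. grad x \<bullet> v)) (at x)"
    and lip: "L-lipschitz_on UNIV grad" and "h k = 0" and "grad k = 0"
  shows "h y \<le> L / 2 * (norm (y - k))\<^sup>2"
proof -
  define v where "v = y - k"
  define phi where "phi s = h (k + s *\<^sub>R v) - L / 2 * s\<^sup>2 * (norm v)\<^sup>2" for s :: real
  have "phi 1 \<le> phi 0"
  proof (rule DERIV_nonpos_imp_nonincreasing[of 0 1 phi])
    fix s :: real
    assume s: "0 \<le> s" "s \<le> 1"
    have "((\<lambda>s. h (k + s *\<^sub>R v)) has_derivative (\<lambda>u. grad (k + s *\<^sub>R v) \<bullet> (u *\<^sub>R v))) (at s)"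
      by (rule has_derivative_compose[OF _ deriv, where f="\<lambda>s. k + s *\<^sub>R v", simplified])
         (auto intro!: derivative_eq_intros)
    moreover have "(\<lambda>u. grad (k + s *\<^sub>R v) \<bullet> (u *\<^sub>R v)) = (*) (grad (k + s *\<^sub>R v) \<bullet> v)"
      by (simp add: fun_eq_iff)
    ultimately have dh: "((\<lambda>s. h (k + s *\<^sub>R v)) has_real_derivative grad (k + s *\<^sub>R v) \<bullet> v) (at s)"
      by (simp add: has_field_derivative_def)
    have dphi: "(phi has_real_derivative grad (k + s *\<^sub>R v) \<bullet> v - L * s * (norm v)\<^sup>2) (at s)"
      unfolding phi_def by (rule derivative_eq_intros dh | simp)+
    have "grad (k + s *\<^sub>R v) \<bullet> v = (grad (k + s *\<^sub>R v) - grad k) \<bullet> v"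
      using \<open>grad k = 0\<close> by simp
    also have "\<dots> \<le> norm (grad (k + s *\<^sub>R v) - grad k) * norm v"
      by (rule norm_cauchy_schwarz)
    also have "\<dots> \<le> L * norm (s *\<^sub>R v) * norm v"
      using lip unfolding lipschitz_on_def
      by (intro mult_right_mono) (metis UNIV_I dist_norm add_diff_cancel_left', simp)
    also have "\<dots> = L * s * (norm v)\<^sup>2"
      using s by (simp add: power2_eq_square)
    finally have "grad (k + s *\<^sub>R v) \<bullet> v \<le> L * s * (norm v)\<^sup>2" .
    with dphi show "\<exists>y. (phi has_real_derivative y) (at s) \<and> y \<le> 0"
      by auto
  qed simp
  then show ?thesis
    by (simp add: phi_def \<open>h k = 0\<close> v_def)
qed

lemma first_order_surrogate_eq_at:
  assumes "first_order_surrogate Theta L phi k G"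
  shows "G k = phi k"
  using assms unfolding first_order_surrogate_def by auto

lemma first_order_surrogate_nonneg_constant:
  assumes "first_order_surrogate Theta L phi k G"
  shows "0 \<le> L"
  using assms unfolding first_order_surrogate_def lipschitz_on_def by auto

lemma first_order_surrogate_upper_bound:
  assumes "first_order_surrogate Theta L phi k G"
  shows "G y \<le> phi y + L / 2 * (norm (y - k))\<^sup>2"
proof -
  obtain grad where "\<And>x. ((\<lambda>y. G y - phi y) has_derivative (\<lambda>v. grad x \<bullet> v)) (at x)"
    "L-lipschitz_on UNIV grad" "G k - phi k = 0" "grad k = 0"
    using assms unfolding first_order_surrogate_def by blast
  then have "G y - phi y \<le> L / 2 * (norm (y - k))\<^sup>2"
    by (rule lipschitz_gradient_quadratic_bound)
  then show ?thesis
    by simp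
qed

lemma finite_histories: "finite (histories T n)"
  using finite_lists_length_eq[of "{1..T}" n] unfolding histories_def by (simp add: conj_commute)

lemma card_histories: "card (histories T n) = T ^ n"
  using card_lists_length_eq[of "{1..T}" n] unfolding histories_def by (simp add: conj_commute)

lemma histories_nonempty: "T \<ge> 1 \<Longrightarrow> histories T n \<noteq> {}"
  unfolding histories_def by (rule ccontr) (auto dest!: spec[of _ "replicate n 1"])

lemma histories_0: "histories T 0 = {[]}"
  unfolding histories_def by auto

lemma histories_Suc: "histories T (Suc n) = (\<lambda>(hs, s). hs @ [s]) ` (histories T n \<times> {1..T})"
proof (intro set_eqI iffI)
  fix xs
  assume "xs \<in> histories T (Suc n)"
  then have "length xs = Suc n" "set xs \<subseteq> {1..T}"
    by (auto simp: histories_def)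
  moreover obtain ys y where "xs = ys @ [y]"
    using \<open>length xs = Suc n\<close> by (metis length_Suc_conv_rev)
  ultimately show "xs \<in> (\<lambda>(hs, s). hs @ [s]) ` (histories T n \<times> {1..T})"
    by (auto simp: histories_def image_iff)
qed (auto simp: histories_def)

lemma set_subset_of_histories: "hs \<in> histories T n \<Longrightarrow> set hs \<subseteq> {1..T}"
  by (simp add: histories_def)

lemma Nil_notin_histories: "n \<ge> 1 \<Longrightarrow> [] \<notin> histories T n"
  by (simp add: histories_def)

lemma sum_histories_Suc:
  "(\<Sum>hs\<in>histories T (Suc n). X hs) = (\<Sum>hs\<in>histories T n. \<Sum>s=1..T. X (hs @ [s]))"
proof -
  have "inj_on (\<lambda>(hs, s). hs @ [s]) (histories T n \<times> {1..T})"
    by (auto simp: inj_on_def)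
  then show ?thesis
    unfolding histories_Suc by (simp add: sum.reindex sum.cartesian_product split_def)
qed

lemma expectation_histories:
  fixes X :: "nat list \<Rightarrow> real"
  assumes "T \<ge> 1"
  shows "measure_pmf.expectation (pmf_of_set (histories T n)) X
           = (\<Sum>hs\<in>histories T n. X hs) / real T ^ n"
  using assms by (simp add: integral_pmf_of_set histories_nonempty finite_histories card_histories)

lemma expectation_histories_0:
  fixes X :: "nat list \<Rightarrow> real"
  shows "measure_pmf.expectation (pmf_of_set (histories T 0)) X = X []"
  by (simp add: histories_0 integral_pmf_of_set)

lemma expectation_histories_Suc:
  fixes X :: "nat list \<Rightarrow> real"
  assumes "T \<ge> 1"
  shows "measure_pmf.expectation (pmf_of_set (histories T (Suc n))) X
           = measure_pmf.expectation (pmf_of_set (histories T n))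
               (\<lambda>hs. (1 / real T) * (\<Sum>s=1..T. X (hs @ [s])))"
  using assms
  by (simp add: expectation_histories sum_histories_Suc sum_distrib_left[symmetric] field_simps)

lemma integrable_histories:
  fixes X :: "nat list \<Rightarrow> real"
  shows "T \<ge> 1 \<Longrightarrow> integrable (measure_pmf (pmf_of_set (histories T n))) X"
  by (rule integrable_measure_pmf_finite) (simp add: histories_nonempty finite_histories)

lemma expectation_histories_mono:
  fixes X Y :: "nat list \<Rightarrow> real"
  assumes "T \<ge> 1" "\<And>hs. hs \<in> histories T n \<Longrightarrow> X hs \<le> Y hs"
  shows "measure_pmf.expectation (pmf_of_set (histories T n)) X
           \<le> measure_pmf.expectation (pmf_of_set (histories T n)) Y"
  unfolding expectation_histories[OF assms(1)] using assms(2)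
  by (simp add: sum_mono divide_right_mono)

lemma lyapunov_sublinear_rate:
  fixes a b :: "nat \<Rightarrow> real"
  assumes a_Suc: "\<And>m. m \<ge> 1 \<Longrightarrow> a (Suc m) \<le> a m - d * b m"
    and b_Suc: "\<And>m. m \<ge> 1 \<Longrightarrow> b (Suc m) \<le> b m"
    and "a 1 \<le> C" "0 \<le> b n" "b n \<le> a n" "0 < d" "d \<le> 1" "n \<ge> 1"
  shows "b n \<le> C / (d * real n)"
proof -
  have potential: "a m + d * (real m - 1) * b m \<le> C" if "m \<ge> 1" for m
    using that
  proof (induction m rule: nat_induct_at_least)
    case base
    then show ?case using \<open>a 1 \<le> C\<close> by simp
  next
    case (Suc m)
    have "d * real m * b (Suc m) \<le> d * real m * b m"
      using b_Suc[OF Suc.hyps] \<open>0 < d\<close> by (intro mult_left_mono) auto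
    with a_Suc[OF Suc.hyps] Suc.IH show ?case
      by (simp add: algebra_simps)
  qed
  have "b n * (d * real n) \<le> b n * (1 + d * (real n - 1))"
    using \<open>0 \<le> b n\<close> \<open>d \<le> 1\<close> by (intro mult_left_mono) (auto simp: algebra_simps)
  also have "\<dots> \<le> a n + d * (real n - 1) * b n"
    using \<open>b n \<le> a n\<close> by (simp add: algebra_simps)
  also have "\<dots> \<le> C"
    using potential \<open>n \<ge> 1\<close> .
  finally show ?thesis
    using \<open>0 < d\<close> \<open>n \<ge> 1\<close> by (simp add: pos_le_divide_eq)
qed

lemma geometric_decay_from_one:
  fixes a :: "nat \<Rightarrow> real"
  assumes "\<And>m. m \<ge> 1 \<Longrightarrow> a (Suc m) \<le> q * a m" "a 1 \<le> C" "0 \<le> q" "n \<ge> 1"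
  shows "a n \<le> q ^ (n - 1) * C"
  using \<open>n \<ge> 1\<close>
proof (induction n rule: nat_induct_at_least)
  case base
  then show ?case using assms(2) by simp
next
  case (Suc m)
  have "a (Suc m) \<le> q * (q ^ (m - 1) * C)"
    using assms(1)[OF Suc.hyps] Suc.IH \<open>0 \<le> q\<close> by (meson mult_left_mono order_trans)
  also have "\<dots> = q ^ (Suc m - 1) * C"
    using Suc.hyps by (cases m) auto
  finally show ?case .
qed

locale miso =
  fixes Theta :: "'a::euclidean_space set"
    and T :: nat
    and f :: "nat \<Rightarrow> 'a \<Rightarrow> real"
    and F :: "'a \<Rightarrow> real"
    and theta_star :: 'a
    and L rho :: real
    and theta :: "nat list \<Rightarrow> 'a"
    and g :: "nat list \<Rightarrow> nat \<Rightarrow> 'a \<Rightarrow> real"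
  assumes Theta_convex: "convex Theta"
    and T_pos: "T \<ge> 1"
    and F_def: "\<And>x. F x = (1 / real T) * (\<Sum>t=1..T. f t x)"
    and star_in: "theta_star \<in> Theta"
    and star_min: "\<And>x. x \<in> Theta \<Longrightarrow> F theta_star \<le> F x"
    and rho_ge: "rho \<ge> L"
    and g0_sur: "\<And>t. t \<in> {1..T} \<Longrightarrow>
                   sc_first_order_surrogate Theta L rho (f t) (theta []) (g [] t)
                   \<and> majorant (f t) (g [] t)"
    and gn_sur: "\<And>hs s. set hs \<subseteq> {1..T} \<Longrightarrow> s \<in> {1..T} \<Longrightarrow>
                   sc_first_order_surrogate Theta L rho (f s) (theta hs) (g (hs @ [s]) s)
                   \<and> majorant (f s) (g (hs @ [s]) s)"
    and gn_keep: "\<And>hs s t. set hs \<subseteq> {1..T} \<Longrightarrow> s \<in> {1..T} \<Longrightarrow> t \<in> {1..T} \<Longrightarrow>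
                   t \<noteq> s \<Longrightarrow> g (hs @ [s]) t = g hs t"
    and theta_in: "\<And>hs. set hs \<subseteq> {1..T} \<Longrightarrow> theta hs \<in> Theta"
    and theta_argmin: "\<And>hs x. set hs \<subseteq> {1..T} \<Longrightarrow> hs \<noteq> [] \<Longrightarrow> x \<in> Theta \<Longrightarrow>
                   (1 / real T) * (\<Sum>t=1..T. g hs t (theta hs))
                   \<le> (1 / real T) * (\<Sum>t=1..T. g hs t x)"
begin

definition gbar :: "nat list \<Rightarrow> 'a \<Rightarrow> real" where
  "gbar hs x = (1 / real T) * (\<Sum>t=1..T. g hs t x)"

definition opt_gap :: "nat list \<Rightarrow> real" where
  "opt_gap hs = gbar hs theta_star - F theta_star"

definition iter_gap :: "nat list \<Rightarrow> real" where
  "iter_gap hs = gbar hs (theta hs) - F theta_star"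

abbreviation expect :: "nat \<Rightarrow> (nat list \<Rightarrow> real) \<Rightarrow> real" where
  "expect n X \<equiv> measure_pmf.expectation (pmf_of_set (histories T n)) X"

lemma real_T_pos: "real T > 0"
  using T_pos by simp

lemma sum_f_eq_T_times_F: "(\<Sum>t=1..T. f t x) = real T * F x"
  using real_T_pos by (simp add: F_def)

lemma L_nonneg: "0 \<le> L"
  using g0_sur[of 1] T_pos
  by (auto simp: sc_first_order_surrogate_def intro: first_order_surrogate_nonneg_constant)

lemma surrogate_majorant_strongly_convex:
  assumes "set hs \<subseteq> {1..T}" "t \<in> {1..T}"
  shows "majorant (f t) (g hs t) \<and> strongly_convex_on UNIV rho (g hs t)"
  using assms
proof (induction hs rule: rev_induct)
  case Nil
  then show ?case
    using g0_sur[of t] by (simp add: sc_first_order_surrogate_def)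
next
  case (snoc s hs)
  then have "set hs \<subseteq> {1..T}" "s \<in> {1..T}"
    by auto
  then show ?case
    using snoc gn_sur[of hs s] gn_keep[of hs s t]
    by (cases "t = s") (auto simp: sc_first_order_surrogate_def)
qed

lemma F_le_gbar:
  assumes "set hs \<subseteq> {1..T}"
  shows "F x \<le> gbar hs x"
proof -
  have "(\<Sum>t=1..T. f t x) \<le> (\<Sum>t=1..T. g hs t x)"
    using surrogate_majorant_strongly_convex[OF assms] by (intro sum_mono) (auto simp: majorant_def)
  then show ?thesis
    unfolding F_def gbar_def using real_T_pos by (simp add: divide_right_mono)
qed

lemma gbar_strongly_convex:
  assumes "set hs \<subseteq> {1..T}"
  shows "strongly_convex_on UNIV rho (gbar hs)"
  using strongly_convex_on_average[of "{1..T}" UNIV rho "g hs"]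
    surrogate_majorant_strongly_convex[OF assms] T_pos
  by (simp add: gbar_def[abs_def])

lemma gbar_growth:
  assumes "set hs \<subseteq> {1..T}" "hs \<noteq> []"
  shows "gbar hs (theta hs) + rho / 2 * (norm (theta_star - theta hs))\<^sup>2 \<le> gbar hs theta_star"
  using strongly_convex_on_minimizer_growth[of Theta rho "gbar hs" "theta hs" theta_star]
    strongly_convex_on_subset[OF gbar_strongly_convex[OF assms(1)]]
    Theta_convex theta_in[OF assms(1)] star_in theta_argmin[OF assms]
  by (simp add: gbar_def norm_minus_commute)

lemma gbar_snoc:
  assumes "set hs \<subseteq> {1..T}" "s \<in> {1..T}"
  shows "gbar (hs @ [s]) x = gbar hs x + (1 / real T) * (g (hs @ [s]) s x - g hs s x)"
proof -
  have "(\<Sum>t=1..T. g (hs @ [s]) t x) = g (hs @ [s]) s x + (\<Sum>t\<in>{1..T} - {s}. g hs t x)"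
    using assms by (simp add: sum.remove gn_keep)
  also have "\<dots> = g (hs @ [s]) s x - g hs s x + (\<Sum>t=1..T. g hs t x)"
    using assms(2) by (simp add: sum.remove)
  finally show ?thesis
    unfolding gbar_def using real_T_pos by (simp add: field_simps)
qed

lemma opt_gap_initial: "opt_gap [] \<le> L / 2 * (norm (theta_star - theta []))\<^sup>2"
proof -
  have "g [] t theta_star \<le> f t theta_star + L / 2 * (norm (theta_star - theta []))\<^sup>2"
    if "t \<in> {1..T}" for t
    using g0_sur[OF that] first_order_surrogate_upper_bound unfolding sc_first_order_surrogate_def by blast
  then have "(\<Sum>t=1..T. g [] t theta_star)
      \<le> (\<Sum>t=1..T. f t theta_star + L / 2 * (norm (theta_star - theta []))\<^sup>2)"
    by (intro sum_mono) simp
  also have "\<dots> = real T * (F theta_star + L / 2 * (norm (theta_star - theta []))\<^sup>2)"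
    unfolding sum.distrib sum_f_eq_T_times_F by (simp add: distrib_left)
  finally show ?thesis
    unfolding opt_gap_def gbar_def using real_T_pos by (simp add: field_simps)
qed

lemma opt_gap_step:
  assumes "set hs \<subseteq> {1..T}"
  shows "(1 / real T) * (\<Sum>s=1..T. opt_gap (hs @ [s]))
           \<le> (1 - 1 / real T) * opt_gap hs
             + (1 / real T) * (L / 2 * (norm (theta_star - theta hs))\<^sup>2)"
proof -
  define D where "D = (norm (theta_star - theta hs))\<^sup>2"
  have "g (hs @ [s]) s theta_star \<le> f s theta_star + L / 2 * D" if "s \<in> {1..T}" for s
    using gn_sur[OF assms that] first_order_surrogate_upper_bound
    unfolding sc_first_order_surrogate_def D_def by blast
  then have "(\<Sum>s=1..T. g (hs @ [s]) s theta_star) \<le> (\<Sum>s=1..T. f s theta_star + L / 2 * D)"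
    by (intro sum_mono) simp
  also have "\<dots> = real T * (F theta_star + L / 2 * D)"
    unfolding sum.distrib sum_f_eq_T_times_F by (simp add: distrib_left)
  finally have "(\<Sum>s=1..T. g (hs @ [s]) s theta_star) \<le> real T * (F theta_star + L / 2 * D)" .
  moreover have "(\<Sum>s=1..T. g hs s theta_star) = real T * gbar hs theta_star"
    unfolding gbar_def using real_T_pos by simp
  ultimately have change: "((\<Sum>s=1..T. g (hs @ [s]) s theta_star) - (\<Sum>s=1..T. g hs s theta_star)) / real T
      \<le> L / 2 * D - opt_gap hs"
    using real_T_pos by (simp add: opt_gap_def field_simps)
  have "(\<Sum>s=1..T. opt_gap (hs @ [s]))
      = (\<Sum>s=1..T. opt_gap hs + (1 / real T) * (g (hs @ [s]) s theta_star - g hs s theta_star))"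
    using assms by (intro sum.cong) (auto simp: opt_gap_def gbar_snoc)
  also have "\<dots> = real T * opt_gap hs + ((\<Sum>s=1..T. g (hs @ [s]) s theta_star)
                                          - (\<Sum>s=1..T. g hs s theta_star)) / real T"
    by (simp add: sum.distrib sum_subtractf sum_divide_distrib[symmetric])
  finally have "(1 / real T) * (\<Sum>s=1..T. opt_gap (hs @ [s]))
      = opt_gap hs + (1 / real T) * (((\<Sum>s=1..T. g (hs @ [s]) s theta_star)
                                     - (\<Sum>s=1..T. g hs s theta_star)) / real T)"
    using real_T_pos by (simp add: field_simps)
  also have "\<dots> \<le> opt_gap hs + (1 / real T) * (L / 2 * D - opt_gap hs)"
    using change real_T_pos by (intro add_left_mono mult_left_mono) auto
  finally show ?thesis
    unfolding D_def by (simp add: algebra_simps)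
qed

lemma iter_gap_step:
  assumes "set hs \<subseteq> {1..T}" "s \<in> {1..T}"
  shows "iter_gap (hs @ [s]) \<le> iter_gap hs"
proof -
  have "set (hs @ [s]) \<subseteq> {1..T}"
    using assms by auto
  then have "gbar (hs @ [s]) (theta (hs @ [s])) \<le> gbar (hs @ [s]) (theta hs)"
    unfolding gbar_def using theta_argmin theta_in[OF assms(1)] by blast
  also have "\<dots> = gbar hs (theta hs) + (1 / real T) * (f s (theta hs) - g hs s (theta hs))"
    using gbar_snoc[OF assms] gn_sur[OF assms] first_order_surrogate_eq_at
    unfolding sc_first_order_surrogate_def by metis
  also have "\<dots> \<le> gbar hs (theta hs)"
    using surrogate_majorant_strongly_convex[OF assms] real_T_pos
    by (simp add: majorant_def divide_nonpos_pos)
  finally show ?thesis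
    by (simp add: iter_gap_def)
qed

lemma objective_gap_le_iter_gap:
  "set hs \<subseteq> {1..T} \<Longrightarrow> F (theta hs) - F theta_star \<le> iter_gap hs"
  by (simp add: iter_gap_def F_le_gbar)

lemma iter_gap_le_opt_gap:
  "set hs \<subseteq> {1..T} \<Longrightarrow> hs \<noteq> [] \<Longrightarrow>
     iter_gap hs + rho / 2 * (norm (theta_star - theta hs))\<^sup>2 \<le> opt_gap hs"
  using gbar_growth by (simp add: iter_gap_def opt_gap_def)

lemma expect_opt_gap_1: "expect 1 opt_gap \<le> L / 2 * (norm (theta_star - theta []))\<^sup>2"
proof -
  let ?D = "(norm (theta_star - theta []))\<^sup>2"
  have "expect 1 opt_gap = (1 / real T) * (\<Sum>s=1..T. opt_gap ([] @ [s]))"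
    using expectation_histories_Suc[OF T_pos, of 0] by (simp add: expectation_histories_0)
  also have "\<dots> \<le> (1 - 1 / real T) * opt_gap [] + (1 / real T) * (L / 2 * ?D)"
    by (rule opt_gap_step) simp
  also have "\<dots> \<le> (1 - 1 / real T) * (L / 2 * ?D) + (1 / real T) * (L / 2 * ?D)"
    using opt_gap_initial T_pos by (intro add_right_mono mult_left_mono) auto
  also have "\<dots> = L / 2 * ?D"
    by (simp only: left_diff_distrib mult_1_left diff_add_cancel)
  finally show ?thesis .
qed

lemma expect_opt_gap_Suc:
  assumes "m \<ge> 1"
  shows "expect (Suc m) opt_gap \<le> expect m opt_gap - (1 / real T) * expect m iter_gap"
proof -
  have "expect (Suc m) opt_gap \<le> expect m (\<lambda>hs. opt_gap hs - (1 / real T) * iter_gap hs)"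
    unfolding expectation_histories_Suc[OF T_pos]
  proof (rule expectation_histories_mono[OF T_pos])
    fix hs
    assume hs: "hs \<in> histories T m"
    note admissible = set_subset_of_histories[OF hs]
    have "hs \<noteq> []"
      using hs Nil_notin_histories[OF assms] by auto
    have "L / 2 * (norm (theta_star - theta hs))\<^sup>2 \<le> rho / 2 * (norm (theta_star - theta hs))\<^sup>2"
      using rho_ge by (simp add: mult_right_mono)
    also have "\<dots> \<le> opt_gap hs - iter_gap hs"
      using iter_gap_le_opt_gap[OF admissible \<open>hs \<noteq> []\<close>] by simp
    finally have "(1 / real T) * (L / 2 * (norm (theta_star - theta hs))\<^sup>2)
        \<le> (1 / real T) * (opt_gap hs - iter_gap hs)"
      using real_T_pos by (intro mult_left_mono) auto
    with opt_gap_step[OF admissible]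
    show "(1 / real T) * (\<Sum>s=1..T. opt_gap (hs @ [s])) \<le> opt_gap hs - (1 / real T) * iter_gap hs"
      by (simp add: algebra_simps)
  qed
  also have "\<dots> = expect m opt_gap - (1 / real T) * expect m iter_gap"
    using integrable_histories[OF T_pos] by simp
  finally show ?thesis .
qed

lemma expect_iter_gap_Suc: "expect (Suc m) iter_gap \<le> expect m iter_gap"
  unfolding expectation_histories_Suc[OF T_pos]
proof (rule expectation_histories_mono[OF T_pos])
  fix hs
  assume "hs \<in> histories T m"
  then have "(\<Sum>s=1..T. iter_gap (hs @ [s])) \<le> (\<Sum>s=1..T. iter_gap hs)"
    by (intro sum_mono iter_gap_step set_subset_of_histories) auto
  then show "(1 / real T) * (\<Sum>s=1..T. iter_gap (hs @ [s])) \<le> iter_gap hs"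
    using real_T_pos by (simp add: field_simps)
qed

lemma expect_gaps_ordered:
  assumes "n \<ge> 1"
  shows "0 \<le> expect n (\<lambda>hs. F (theta hs) - F theta_star)"
    and "expect n (\<lambda>hs. F (theta hs) - F theta_star) \<le> expect n iter_gap"
    and "expect n iter_gap \<le> expect n opt_gap"
proof -
  have "expect n (\<lambda>_. 0) \<le> expect n (\<lambda>hs. F (theta hs) - F theta_star)"
    using star_min theta_in set_subset_of_histories
    by (intro expectation_histories_mono[OF T_pos]) (simp add: le_diff_eq)
  then show "0 \<le> expect n (\<lambda>hs. F (theta hs) - F theta_star)"
    by simp
  show "expect n (\<lambda>hs. F (theta hs) - F theta_star) \<le> expect n iter_gap"
    using objective_gap_le_iter_gap set_subset_of_histories
    by (intro expectation_histories_mono[OF T_pos]) blast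
  show "expect n iter_gap \<le> expect n opt_gap"
  proof (intro expectation_histories_mono[OF T_pos])
    fix hs
    assume hs: "hs \<in> histories T n"
    then have "hs \<noteq> []"
      using Nil_notin_histories[OF assms] by auto
    moreover have "0 \<le> rho / 2 * (norm (theta_star - theta hs))\<^sup>2"
      using rho_ge L_nonneg by simp
    ultimately show "iter_gap hs \<le> opt_gap hs"
      using iter_gap_le_opt_gap[OF set_subset_of_histories[OF hs]] by fastforce
  qed
qed

theorem sublinear_rate:
  assumes "n \<ge> 1"
  shows "expect n (\<lambda>hs. F (theta hs) - F theta_star)
           \<le> L * (norm (theta_star - theta []))\<^sup>2 / (2 * (1 / real T) * real n)"
proof -
  have "expect n iter_gap \<le> L / 2 * (norm (theta_star - theta []))\<^sup>2 / ((1 / real T) * real n)"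
  proof (rule lyapunov_sublinear_rate[where a="\<lambda>m. expect m opt_gap"])
    show "0 < 1 / real T" "1 / real T \<le> 1"
      using T_pos by auto
  qed (use expect_opt_gap_Suc expect_iter_gap_Suc expect_opt_gap_1 expect_gaps_ordered[OF assms] assms
       in simp_all)
  also have "\<dots> = L * (norm (theta_star - theta []))\<^sup>2 / (2 * (1 / real T) * real n)"
    by simp
  finally show ?thesis
    using expect_gaps_ordered(2)[OF assms] by linarith
qed

context
  fixes mu :: real
  assumes mu_pos: "mu > 0"
    and F_strongly_convex: "strongly_convex_on UNIV mu F"
begin

abbreviation contraction :: real where
  "contraction \<equiv> (1 - 1 / real T) + (1 / real T) * (L / (rho + mu))"

lemma rho_mu_pos: "rho + mu > 0"
  using mu_pos rho_ge L_nonneg by linarith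

lemma ratio_bounds: "0 \<le> L / (rho + mu)" "L / (rho + mu) \<le> contraction"
proof -
  show "0 \<le> L / (rho + mu)"
    using L_nonneg rho_mu_pos by simp
  have "L / (rho + mu) \<le> 1"
    using rho_ge mu_pos rho_mu_pos by simp
  moreover have "contraction - L / (rho + mu) = (1 - 1 / real T) * (1 - L / (rho + mu))"
    by (simp add: algebra_simps)
  moreover have "1 / real T \<le> 1"
    using T_pos by simp
  ultimately show "L / (rho + mu) \<le> contraction"
    by (smt (verit) mult_nonneg_nonneg)
qed

lemma objective_gap_growth:
  assumes "set hs \<subseteq> {1..T}"
  shows "mu / 2 * (norm (theta_star - theta hs))\<^sup>2 \<le> F (theta hs) - F theta_star"
  using strongly_convex_on_minimizer_growth[of Theta mu F theta_star "theta hs"]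
    strongly_convex_on_subset[OF F_strongly_convex] Theta_convex star_in theta_in[OF assms] star_min
  by simp

lemma opt_gap_lower_bound:
  assumes "set hs \<subseteq> {1..T}" "hs \<noteq> []"
  shows "(rho + mu) / 2 * (norm (theta_star - theta hs))\<^sup>2 \<le> opt_gap hs"
  using iter_gap_le_opt_gap[OF assms] objective_gap_le_iter_gap[OF assms(1)]
    objective_gap_growth[OF assms(1)]
  by (simp add: add_divide_distrib distrib_right)

lemma expect_opt_gap_contracts:
  assumes "m \<ge> 1"
  shows "expect (Suc m) opt_gap \<le> contraction * expect m opt_gap"
proof -
  have "expect (Suc m) opt_gap \<le> expect m (\<lambda>hs. contraction * opt_gap hs)"
    unfolding expectation_histories_Suc[OF T_pos]
  proof (rule expectation_histories_mono[OF T_pos])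
    fix hs
    assume hs: "hs \<in> histories T m"
    note admissible = set_subset_of_histories[OF hs]
    have "hs \<noteq> []"
      using hs Nil_notin_histories[OF assms] by auto
    have "L / 2 * (norm (theta_star - theta hs))\<^sup>2
        = L / (rho + mu) * ((rho + mu) / 2 * (norm (theta_star - theta hs))\<^sup>2)"
      using rho_mu_pos by (simp add: field_simps)
    also have "\<dots> \<le> L / (rho + mu) * opt_gap hs"
      using opt_gap_lower_bound[OF admissible \<open>hs \<noteq> []\<close>] ratio_bounds(1)
      by (rule mult_left_mono)
    finally have "(1 / real T) * (L / 2 * (norm (theta_star - theta hs))\<^sup>2)
        \<le> (1 / real T) * (L / (rho + mu) * opt_gap hs)"
      using real_T_pos by (intro mult_left_mono) auto
    with opt_gap_step[OF admissible]
    show "(1 / real T) * (\<Sum>s=1..T. opt_gap (hs @ [s])) \<le> contraction * opt_gap hs"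
      by (simp add: algebra_simps)
  qed
  then show ?thesis
    by simp
qed

theorem linear_rate:
  assumes "n \<ge> 1"
  shows "expect n (\<lambda>hs. (norm (theta_star - theta hs))\<^sup>2)
           \<le> contraction ^ n * (norm (theta_star - theta []))\<^sup>2"
    and "expect n (\<lambda>hs. F (theta hs) - F theta_star)
           \<le> contraction ^ (n - 1) * (L * (norm (theta_star - theta []))\<^sup>2 / 2)"
proof -
  let ?D0 = "(norm (theta_star - theta []))\<^sup>2"
  have contraction_nonneg: "0 \<le> contraction"
    using ratio_bounds by linarith
  define P where "P = contraction ^ (n - 1)"
  have opt_gap_bound: "expect n opt_gap \<le> P * (L / 2 * ?D0)"
    unfolding P_def using expect_opt_gap_contracts expect_opt_gap_1 contraction_nonneg assms
    by (rule geometric_decay_from_one)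
  have "expect n (\<lambda>hs. (norm (theta_star - theta hs))\<^sup>2) \<le> expect n (\<lambda>hs. 2 / (rho + mu) * opt_gap hs)"
  proof (rule expectation_histories_mono[OF T_pos])
    fix hs
    assume hs: "hs \<in> histories T n"
    then have "hs \<noteq> []"
      using Nil_notin_histories[OF assms] by auto
    with opt_gap_lower_bound[OF set_subset_of_histories[OF hs]] rho_mu_pos
    show "(norm (theta_star - theta hs))\<^sup>2 \<le> 2 / (rho + mu) * opt_gap hs"
      by (simp add: field_simps)
  qed
  also have "\<dots> \<le> 2 / (rho + mu) * (P * (L / 2 * ?D0))"
    unfolding integral_mult_right_zero using rho_mu_pos by (intro mult_left_mono opt_gap_bound) auto
  also have "\<dots> = P * (L / (rho + mu)) * ?D0"
    using rho_mu_pos by (simp add: field_simps)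
  also have "\<dots> \<le> P * contraction * ?D0"
    using ratio_bounds(2) contraction_nonneg by (intro mult_right_mono mult_left_mono) (auto simp: P_def)
  also have "\<dots> = contraction ^ n * ?D0"
    using assms by (simp add: P_def power_eq_if)
  finally show "expect n (\<lambda>hs. (norm (theta_star - theta hs))\<^sup>2) \<le> contraction ^ n * ?D0" .
  show "expect n (\<lambda>hs. F (theta hs) - F theta_star) \<le> contraction ^ (n - 1) * (L * ?D0 / 2)"
    using expect_gaps_ordered[OF assms] opt_gap_bound by (simp add: P_def)
qed

end

end

theorem proposition6p2:
  fixes Theta :: "'a::euclidean_space set"
    and T :: nat
    and f :: "nat \<Rightarrow> 'a \<Rightarrow> real"
    and F :: "'a \<Rightarrow> real"
    and theta_star :: 'a
    and L rho :: real
    and theta :: "nat list \<Rightarrow> 'a"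
    and g :: "nat list \<Rightarrow> nat \<Rightarrow> 'a \<Rightarrow> real"
  assumes Theta_convex: "convex Theta"
    and T_pos: "T \<ge> 1"
    and f_cont: "\<And>t. t \<in> {1..T} \<Longrightarrow> continuous_on UNIV (f t)"
    and F_def: "\<And>x. F x = (1 / real T) * (\<Sum>t=1..T. f t x)"
    and F_convex: "convex_on UNIV F"
    and star_in: "theta_star \<in> Theta"
    and star_min: "\<And>x. x \<in> Theta \<Longrightarrow> F theta_star \<le> F x"
    and rho_ge: "rho \<ge> L"
    and init_in: "theta [] \<in> Theta"
    and g0_sur: "\<And>t. t \<in> {1..T} \<Longrightarrow>
                   sc_first_order_surrogate Theta L rho (f t) (theta []) (g [] t)
                   \<and> majorant (f t) (g [] t)"
    and gn_sur: "\<And>hs s. set hs \<subseteq> {1..T} \<Longrightarrow> s \<in> {1..T} \<Longrightarrow>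
                   sc_first_order_surrogate Theta L rho (f s) (theta hs) (g (hs @ [s]) s)
                   \<and> majorant (f s) (g (hs @ [s]) s)"
    and gn_keep: "\<And>hs s t. set hs \<subseteq> {1..T} \<Longrightarrow> s \<in> {1..T} \<Longrightarrow> t \<in> {1..T} \<Longrightarrow>
                   t \<noteq> s \<Longrightarrow> g (hs @ [s]) t = g hs t"
    and theta_in: "\<And>hs. set hs \<subseteq> {1..T} \<Longrightarrow> theta hs \<in> Theta"
    and theta_argmin: "\<And>hs x. set hs \<subseteq> {1..T} \<Longrightarrow> hs \<noteq> [] \<Longrightarrow> x \<in> Theta \<Longrightarrow>
                   (1 / real T) * (\<Sum>t=1..T. g hs t (theta hs))
                   \<le> (1 / real T) * (\<Sum>t=1..T. g hs t x)"
  shows "(\<forall>n\<ge>1.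
            measure_pmf.expectation (pmf_of_set (histories T n))
              (\<lambda>hs. F (theta hs) - F theta_star)
            \<le> L * (norm (theta_star - theta []))\<^sup>2 / (2 * (1 / real T) * real n))
       \<and> (\<forall>mu>0. strongly_convex_on UNIV mu F \<longrightarrow>
            (\<forall>n\<ge>1.
               measure_pmf.expectation (pmf_of_set (histories T n))
                 (\<lambda>hs. (norm (theta_star - theta hs))\<^sup>2)
               \<le> ((1 - 1 / real T) + (1 / real T) * (L / (rho + mu))) ^ n
                   * (norm (theta_star - theta []))\<^sup>2
             \<and> measure_pmf.expectation (pmf_of_set (histories T n))
                 (\<lambda>hs. F (theta hs) - F theta_star)
               \<le> ((1 - 1 / real T) + (1 / real T) * (L / (rho + mu))) ^ (n - 1)
                   * (L * (norm (theta_star - theta []))\<^sup>2 / 2)))"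
proof -
  interpret miso Theta T f F theta_star L rho theta g
    using Theta_convex T_pos F_def star_in star_min rho_ge g0_sur gn_sur gn_keep theta_in theta_argmin
    by unfold_locales
  show ?thesis
    using sublinear_rate linear_rate by blast
qed

end
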